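(* Let $a,b,d>0$, let $c_-$ be the unique negative zero of $Q(x)=4ax^3-b^2x^2-18abd\,x+27a^2d^2+4db^3$, let $c^*=-\sqrt{3bd}$, and assume $c\in(c_-,c^* )$. Let $\phi(x)=\frac{ax^3+bx^2+cx+d}{x^3}$ ($x>0$), $x_m=\frac{-c-\sqrt{c^2-3bd}}{b}$, $x_M=\frac{-c+\sqrt{c^2-3bd}}{b}$, and $c_1^*=-2\sqrt{bd}$. \begin{description} \item[(a)] $c_-<c_1^*$. \item[(b)] $\phi(x_m)>a$ if and only if $c>c_1^*$. \item[(c)] Suppose $c>c_1^*$. Then there exists a unique number $\eta>x_M$ such that $\phi(\eta)=\phi(x_m)$, and $$\eta=\frac{-dx_m}{cx_m+2d}.$$ \end{description}
   Context: $x_m<x_M$ are the local minimum and local maximum points of $\phi$ on $(0,\infty)$. *)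

theory Defs
  imports Complex_Main
begin

definition Qpoly :: "real \<Rightarrow> real \<Rightarrow> real \<Rightarrow> real \<Rightarrow> real" where
  "Qpoly a b d x = 4*a*x^3 - b^2*x^2 - 18*a*b*d*x + 27*a^2*d^2 + 4*d*b^3"

definition phi :: "real \<Rightarrow> real \<Rightarrow> real \<Rightarrow> real \<Rightarrow> real \<Rightarrow> real" where
  "phi a b c d x = (a*x^3 + b*x^2 + c*x + d) / x^3"

end

theory Submission
  imports Defs "HOL-Real_Asymp.Real_Asymp"
begin

text \<open>In the variable \<open>t = 1/x\<close>, \<open>\<phi>\<close> becomes the cubic \<open>a + b t + c t\<^sup>2 + d t\<^sup>3\<close>,
whose critical points are the reciprocals of \<open>x\<^sub>m\<close> and \<open>x\<^sub>M\<close>. Subtracting the critical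
value at \<open>t\<^sub>m = 1/x\<^sub>m\<close> leaves \<open>d (t - t\<^sub>m)\<^sup>2 (t - r)\<close> with \<open>r = -(c + 2s)/(3d)\<close>,
\<open>s = \<surd>(c\<^sup>2 - 3bd)\<close>. At \<open>t = 0\<close> this gives \<open>\<phi>(x\<^sub>m) - a = d t\<^sub>m\<^sup>2 r\<close>, so (b) says
\<open>r > 0\<close>, i.e. \<open>2s < -c\<close>, i.e. \<open>c\<^sup>2 < 4bd\<close>; and for \<open>\<eta> > x\<^sub>M\<close> the only solution of
\<open>\<phi>(\<eta>) = \<phi>(x\<^sub>m)\<close> is \<open>1/\<eta> = r\<close>. Part (a) holds because \<open>Q(-2\<surd>(bd)) > 0\<close> while
\<open>Q \<rightarrow> -\<infinity>\<close> at \<open>-\<infinity>\<close>, so the unique negative zero lies below \<open>-2\<surd>(bd)\<close>.\<close>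

lemma Qpoly_neg_two_sqrt:
  assumes "b \<ge> 0" "d \<ge> 0"
  shows "Qpoly a b d (- 2 * sqrt (b*d)) = 4*a*b*d * sqrt (b*d) + 27*a^2*d^2"
proof -
  define u where "u = sqrt (b*d)"
  have "u^2 = b*d" using assms by (simp add: u_def)
  then show ?thesis
    unfolding Qpoly_def u_def[symmetric] by algebra
qed

lemma Qpoly_zero_below:
  assumes "a > 0" "Qpoly a b d y > 0"
  obtains x where "x < y" "Qpoly a b d x = 0"
proof -
  have "filterlim (Qpoly a b d) at_bot at_bot"
    using \<open>a > 0\<close> unfolding Qpoly_def by real_asymp
  then have "eventually (\<lambda>x. Qpoly a b d x \<le> 0 \<and> x \<le> y) at_bot"
    by (auto simp: filterlim_at_bot intro: eventually_conj eventually_le_at_bot)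
  then obtain x0 where "Qpoly a b d x0 \<le> 0" "x0 \<le> y"
    by (auto simp: eventually_at_bot_linorder)
  moreover have "isCont (Qpoly a b d) x" for x
    unfolding Qpoly_def by (intro continuous_intros)
  ultimately obtain x where "x0 \<le> x" "x \<le> y" "Qpoly a b d x = 0"
    using IVT[of "Qpoly a b d" x0 0 y] assms(2) by auto
  moreover from this assms(2) have "x \<noteq> y" by auto
  ultimately show thesis using that[of x] by linarith
qed

lemma unique_neg_zero_Qpoly_less:
  assumes "a > 0" "b > 0" "d > 0"
    and "\<And>y. y < 0 \<Longrightarrow> Qpoly a b d y = 0 \<Longrightarrow> y = cm"
  shows "cm < - 2 * sqrt (b*d)"
proof -
  have "Qpoly a b d (- 2 * sqrt (b*d)) > 0"
    unfolding Qpoly_neg_two_sqrt[OF less_imp_le[OF \<open>b > 0\<close>] less_imp_le[OF \<open>d > 0\<close>]]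
    using assms(1-3) by (simp add: add_pos_pos)
  then obtain x where "x < - 2 * sqrt (b*d)" "Qpoly a b d x = 0"
    using Qpoly_zero_below \<open>a > 0\<close> by blast
  moreover have "sqrt (b*d) > 0" using assms(2,3) by simp
  ultimately have "x = cm" using assms(4)[of x] by linarith
  with \<open>x < - 2 * sqrt (b*d)\<close> show ?thesis by simp
qed

lemma phi_eq_cubic_inverse:
  assumes "x \<noteq> 0"
  shows "phi a b c d x = a + b*(1/x) + c*(1/x)^2 + d*(1/x)^3"
  using assms unfolding phi_def by (simp add: field_simps power2_eq_square power3_eq_cube)

lemma critical_point_factor:
  fixes b c d \<sigma> :: real
  assumes "\<sigma>^2 = c^2 - 3*b*d"
  shows "(- c - \<sigma>) * (- c + \<sigma>) = 3*b*d"
  using assms by (simp add: power2_eq_square algebra_simps)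

lemma critical_point_nonzero:
  fixes b c d \<sigma> :: real
  assumes "b \<noteq> 0" "d \<noteq> 0" "\<sigma>^2 = c^2 - 3*b*d"
  shows "(- c - \<sigma>) / b \<noteq> 0"
  using critical_point_factor[OF assms(3)] assms(1,2) by auto

lemma inverse_critical_point:
  fixes b c d \<sigma> :: real
  assumes "b \<noteq> 0" "d \<noteq> 0" "\<sigma>^2 = c^2 - 3*b*d"
  shows "1 / ((- c - \<sigma>) / b) = (- c + \<sigma>) / (3*d)"
  using critical_point_factor[OF assms(3)] critical_point_nonzero[OF assms] assms(1,2)
  by (simp add: field_simps)

text \<open>\<open>t\<^sub>0\<close> is a double root of the cubic minus its value at \<open>t\<^sub>0\<close>; the third root \<open>r\<close>
comes from Vieta, \<open>2 t\<^sub>0 + r = -c/d\<close>.\<close>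
lemma cubic_minus_critical_value:
  fixes b c d \<sigma> t :: real
  assumes "d \<noteq> 0" "\<sigma>^2 = c^2 - 3*b*d"
  defines "t0 \<equiv> (- c + \<sigma>) / (3*d)" and "r \<equiv> (- c - 2*\<sigma>) / (3*d)"
  shows "(b*t + c*t^2 + d*t^3) - (b*t0 + c*t0^2 + d*t0^3) = d * (t - t0)^2 * (t - r)"
proof -
  have "b = (c^2 - \<sigma>^2) / (3*d)" using assms(1,2) by (simp add: field_simps)
  then show ?thesis
    unfolding t0_def r_def using assms(1) by (simp add: field_simps) algebra
qed

lemma phi_minus_critical_value:
  assumes "b \<noteq> 0" "d \<noteq> 0" "\<sigma>^2 = c^2 - 3*b*d" "x \<noteq> 0"
  defines "t0 \<equiv> (- c + \<sigma>) / (3*d)" and "r \<equiv> (- c - 2*\<sigma>) / (3*d)"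
  shows "phi a b c d x - phi a b c d ((- c - \<sigma>) / b) = d * (1/x - t0)^2 * (1/x - r)"
proof -
  have "1 / ((- c - \<sigma>) / b) = t0"
    unfolding t0_def using inverse_critical_point[OF assms(1-3)] .
  moreover have "(- c - \<sigma>) / b \<noteq> 0" using critical_point_nonzero[OF assms(1-3)] .
  ultimately show ?thesis
    using cubic_minus_critical_value[OF assms(2,3), of "1/x"] assms(4)
    by (simp add: phi_eq_cubic_inverse t0_def r_def algebra_simps)
qed

lemma phi_critical_value_minus_a:
  assumes "b \<noteq> 0" "d \<noteq> 0" "\<sigma>^2 = c^2 - 3*b*d"
  defines "t0 \<equiv> (- c + \<sigma>) / (3*d)" and "r \<equiv> (- c - 2*\<sigma>) / (3*d)"
  shows "phi a b c d ((- c - \<sigma>) / b) - a = d * t0^2 * r"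
proof -
  have "1 / ((- c - \<sigma>) / b) = t0"
    unfolding t0_def using inverse_critical_point[OF assms(1-3)] .
  moreover have "(- c - \<sigma>) / b \<noteq> 0" using critical_point_nonzero[OF assms(1-3)] .
  ultimately show ?thesis
    using cubic_minus_critical_value[OF assms(2,3), of 0]
    by (simp add: phi_eq_cubic_inverse t0_def r_def algebra_simps)
qed

lemma phi_critical_value_gt_iff:
  fixes a b c d s :: real
  assumes "b \<noteq> 0" "d > 0" "s \<noteq> c" "s^2 = c^2 - 3*b*d"
  shows "a < phi a b c d ((- c - s) / b) \<longleftrightarrow> 2*s < - c"
proof -
  define tm r where "tm = (- c + s) / (3*d)" and "r = (- c - 2*s) / (3*d)"
  have pos: "0 < d * tm^2" using assms(2,3) by (simp add: tm_def)
  have "phi a b c d ((- c - s) / b) - a = d * tm^2 * r"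
    using phi_critical_value_minus_a[OF assms(1) _ assms(4)] assms(2) by (simp add: tm_def r_def)
  then have "a < phi a b c d ((- c - s) / b) \<longleftrightarrow> 0 < d * tm^2 * r" by linarith
  also have "\<dots> \<longleftrightarrow> 0 < r"
    using zero_less_mult_pos mult_pos_pos pos by metis
  also have "\<dots> \<longleftrightarrow> 2*s < - c"
    unfolding r_def using assms(2) by (simp add: zero_less_divide_iff)
  finally show ?thesis .
qed

lemma sqrt_discriminant_bounds:
  fixes b c d :: real
  assumes "b > 0" "d > 0" "c < - sqrt (3*b*d)"
  shows "0 < sqrt (c^2 - 3*b*d)" "sqrt (c^2 - 3*b*d) < - c"
proof -
  have "0 < sqrt (3*b*d)" using assms(1,2) by simp
  then have "c < 0" using assms(3) by linarith
  have "sqrt (3*b*d) < sqrt (c^2)" using assms(3) \<open>c < 0\<close> by simp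
  then have "3*b*d < c^2" by (simp only: real_sqrt_less_iff)
  then show "0 < sqrt (c^2 - 3*b*d)" by simp
  have "c^2 - 3*b*d < c^2" using assms(1,2) by simp
  then have "sqrt (c^2 - 3*b*d) < sqrt (c^2)" by (simp only: real_sqrt_less_iff)
  then show "sqrt (c^2 - 3*b*d) < - c" using \<open>c < 0\<close> by simp
qed

lemma neg_two_sqrt_less_iff:
  fixes b c d :: real
  assumes "b \<ge> 0" "d \<ge> 0" "c < 0" "3*b*d \<le> c^2"
  shows "- 2 * sqrt (b*d) < c \<longleftrightarrow> 2 * sqrt (c^2 - 3*b*d) < - c"
proof -
  have two: "2 * sqrt x = sqrt (4*x)" for x :: real
    by (simp add: real_sqrt_mult)
  have "- 2 * sqrt (b*d) < c \<longleftrightarrow> sqrt (c^2) < sqrt (4*(b*d))"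
    using \<open>c < 0\<close> by (simp add: two, linarith)
  also have "\<dots> \<longleftrightarrow> sqrt (4*(c^2 - 3*b*d)) < sqrt (c^2)"
    unfolding real_sqrt_less_iff by simp
  also have "\<dots> \<longleftrightarrow> 2 * sqrt (c^2 - 3*b*d) < - c"
    using \<open>c < 0\<close> by (simp add: two)
  finally show ?thesis .
qed

lemma third_root_formula:
  fixes b c d \<sigma> :: real
  assumes "b \<noteq> 0" "d \<noteq> 0" "\<sigma>^2 = c^2 - 3*b*d" "- c - 2*\<sigma> \<noteq> 0"
  defines "x0 \<equiv> (- c - \<sigma>) / b"
  shows "(- d * x0) / (c * x0 + 2*d) = 3*d / (- c - 2*\<sigma>)"
proof -
  have "x0 \<noteq> 0" "1 / x0 = (- c + \<sigma>) / (3*d)"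
    unfolding x0_def using critical_point_nonzero[OF assms(1-3)] inverse_critical_point[OF assms(1-3)]
    by auto
  then have den: "c * x0 + 2*d = x0 * (c + 2*\<sigma>) / 3"
    using assms(2) by (simp add: field_simps)
  have "c + 2*\<sigma> \<noteq> 0" using assms(4) by linarith
  with \<open>x0 \<noteq> 0\<close> have "c * x0 + 2*d \<noteq> 0" unfolding den by simp
  moreover have "(- d * x0) * (- c - 2*\<sigma>) = 3*d * (c * x0 + 2*d)"
    unfolding den by (simp add: algebra_simps)
  ultimately show ?thesis using assms(4) frac_eq_eq by blast
qed

lemma less_iff_inverse_between:
  fixes x y :: real
  assumes "0 < x"
  shows "x < y \<longleftrightarrow> 0 < 1/y \<and> 1/y < 1/x"
  using assms by (smt (verit, ccfv_SIG) frac_less2 zero_less_divide_iff)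

text \<open>In terms of \<open>t = 1/\<eta>\<close>, the condition \<open>\<eta> > x\<^sub>M\<close> reads \<open>0 < t < t\<^sub>M\<close>, an interval
containing the simple root \<open>r\<close> but not the double root \<open>t\<^sub>m > t\<^sub>M\<close>.\<close>
lemma phi_level_set_beyond_xM:
  fixes a b c d s :: real
  assumes "b > 0" "d > 0" "s > 0" "s^2 = c^2 - 3*b*d" "2*s < - c"
  shows "{\<eta>. (- c + s) / b < \<eta> \<and> phi a b c d \<eta> = phi a b c d ((- c - s) / b)}
    = {3*d / (- c - 2*s)}"
proof -
  define tm tM r where "tm = (- c + s) / (3*d)" and "tM = (- c - s) / (3*d)"
    and "r = (- c - 2*s) / (3*d)"
  have sq: "(- s)^2 = c^2 - 3*b*d" using assms(4) by simp
  have xM: "1 / ((- c + s) / b) = tM"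
    using inverse_critical_point[OF _ _ sq] assms(1,2) by (simp add: tM_def)
  have diff: "phi a b c d \<eta> - phi a b c d ((- c - s) / b) = d * (1/\<eta> - tm)^2 * (1/\<eta> - r)"
    if "\<eta> \<noteq> 0" for \<eta>
    using phi_minus_critical_value[OF _ _ assms(4) that] assms(1,2) by (simp add: tm_def r_def)
  have "0 < 3*d" using assms(2) by simp
  have r: "0 < r" "r < tM" "tM < tm"
    unfolding r_def tM_def tm_def using assms(3,5) \<open>0 < 3*d\<close>
    by (auto intro: divide_strict_right_mono)
  then have "0 < (- c + s) / b"
    using xM by (metis less_trans zero_less_divide_1_iff)
  have beyond_iff: "(- c + s) / b < \<eta> \<longleftrightarrow> 0 < 1/\<eta> \<and> 1/\<eta> < tM" for \<eta>
    unfolding xM[symmetric] by (rule less_iff_inverse_between[OF \<open>0 < (- c + s) / b\<close>])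
  show ?thesis
  proof (intro set_eqI iffI)
    fix \<eta> assume "\<eta> \<in> {\<eta>. (- c + s) / b < \<eta> \<and> phi a b c d \<eta> = phi a b c d ((- c - s) / b)}"
    then have beyond: "(- c + s) / b < \<eta>" and level: "phi a b c d \<eta> = phi a b c d ((- c - s) / b)"
      by auto
    have t: "0 < 1/\<eta>" "1/\<eta> < tM" using beyond_iff[of \<eta>] beyond by blast+
    then have "\<eta> \<noteq> 0" by auto
    from diff[OF this] level have "d * (1/\<eta> - tm)^2 * (1/\<eta> - r) = 0" by simp
    moreover have "1/\<eta> \<noteq> tm" using t r by linarith
    ultimately have "1/\<eta> = r" using assms(2) by simp
    then have "\<eta> = 1/r" by (metis div_by_1 divide_divide_eq_right mult_1)
    then show "\<eta> \<in> {3*d / (- c - 2*s)}" by (simp add: r_def)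
  next
    fix \<eta> assume "\<eta> \<in> {3*d / (- c - 2*s)}"
    then have "1/\<eta> = r" by (simp add: r_def)
    then have "(- c + s) / b < \<eta>" and "\<eta> \<noteq> 0" using beyond_iff[of \<eta>] r by auto
    moreover from diff[OF \<open>\<eta> \<noteq> 0\<close>] \<open>1/\<eta> = r\<close>
    have "phi a b c d \<eta> = phi a b c d ((- c - s) / b)" by simp
    ultimately show "\<eta> \<in> {\<eta>. (- c + s) / b < \<eta> \<and> phi a b c d \<eta> = phi a b c d ((- c - s) / b)}"
      by simp
  qed
qed

theorem lemma3:
  fixes a b c d cm :: real
  assumes "a > 0" and "b > 0" and "d > 0"
    and "cm < 0" and "Qpoly a b d cm = 0"
    and "\<And>y. y < 0 \<Longrightarrow> Qpoly a b d y = 0 \<Longrightarrow> y = cm"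
    and "cm < c" and "c < - sqrt (3*b*d)"
  defines "xm \<equiv> (- c - sqrt (c^2 - 3*b*d)) / b"
    and "xM \<equiv> (- c + sqrt (c^2 - 3*b*d)) / b"
    and "c1 \<equiv> - 2 * sqrt (b*d)"
  shows "cm < c1
    \<and> (phi a b c d xm > a \<longleftrightarrow> c > c1)
    \<and> (c > c1 \<longrightarrow>
          (\<exists>!\<eta>. \<eta> > xM \<and> phi a b c d \<eta> = phi a b c d xm)
        \<and> (let \<eta> = (- d * xm) / (c * xm + 2*d) in \<eta> > xM \<and> phi a b c d \<eta> = phi a b c d xm))"
proof -
  define s where "s = sqrt (c^2 - 3*b*d)"
  have s: "0 < s" "s < - c" using sqrt_discriminant_bounds[OF assms(2,3,8)] by (simp_all add: s_def)
  then have "0 < c^2 - 3*b*d" by (simp add: s_def)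
  then have s2: "s^2 = c^2 - 3*b*d" by (simp add: s_def)
  have xm: "xm = (- c - s) / b" and xM: "xM = (- c + s) / b" by (simp_all add: xm_def xM_def s_def)
  have c1_iff: "c1 < c \<longleftrightarrow> 2*s < - c"
    unfolding c1_def s_def using neg_two_sqrt_less_iff[of b d c] assms(2,3) s \<open>0 < c^2 - 3*b*d\<close>
    by simp
  have b: "a < phi a b c d xm \<longleftrightarrow> c1 < c"
    unfolding xm c1_iff using phi_critical_value_gt_iff[OF _ assms(3) _ s2] assms(2) s by simp
  have c: "(\<exists>!\<eta>. \<eta> > xM \<and> phi a b c d \<eta> = phi a b c d xm)
        \<and> (let \<eta> = (- d * xm) / (c * xm + 2*d) in \<eta> > xM \<and> phi a b c d \<eta> = phi a b c d xm)"
    if "c1 < c"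
  proof -
    have "2*s < - c" using that c1_iff by simp
    then have "\<eta> > xM \<and> phi a b c d \<eta> = phi a b c d xm \<longleftrightarrow> \<eta> = 3*d / (- c - 2*s)" for \<eta>
      using phi_level_set_beyond_xM[OF assms(2,3) s(1) s2, of a] unfolding xm xM set_eq_iff by auto
    moreover have "(- d * xm) / (c * xm + 2*d) = 3*d / (- c - 2*s)"
      unfolding xm using third_root_formula[OF _ _ s2] assms(2,3) \<open>2*s < - c\<close> by simp
    ultimately show ?thesis by auto
  qed
  show ?thesis
    using unique_neg_zero_Qpoly_less[OF assms(1-3,6)] b c by (simp add: c1_def)
qed

end
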